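(* If $C$ is a free $E$-linear code of length $2n$, then $LSHull(C)=SHull(C)$.
   Context: $E=\langle \kappa,\tau \mid 2\kappa=2\tau=0,\ \kappa^2=\kappa,\ \tau^2=\tau,\ \kappa\tau=\kappa,\ \tau\kappa=\tau\rangle$ is the non-unital ring $\{0,\kappa,\tau,\zeta\}$, $\zeta=\kappa+\tau$, with $e\kappa=e\tau=e$, $e\zeta=0$ for all $e\in E$. Every $e\in E$ is uniquely $u\kappa+v\zeta$ ($u,v\in\mathbb{F}_2$); $\pi(u\kappa+v\zeta)=u$, componentwise. An $E$-linear code of length $2n$ is a left $E$-submodule $C\subseteq E^{2n}$; $C_{Res}=\pi(C)$, $C_{Tor}=\{v\in\mathbb{F}_2^{2n}:\zeta v\in C\}$ (componentwise, $0\cdot\zeta=0,1\cdot\zeta=\zeta$); $C$ is free if $C_{Res}=C_{Tor}$. Symplectic inner product: $\langle (u|v),(u'|v')\rangle_s=\sum_i u_iv'_i+\sum_i v_iu'_i$. $C^{\perp_{S_L}}=\{z\in E^{2n}:\langle z,w\rangle_s=0\ \forall w\in C\}$, $C^{\perp_{S_R}}=\{z\in E^{2n}:\langle w,z\rangle_s=0\ \forall w\in C\}$, $C^{\perp_S}=C^{\perp_{S_L}}\cap C^{\perp_{S_R}}$, $LSHull(C)=C\cap C^{\perp_{S_L}}$, $SHull(C)=C\cap C^{\perp_S}$. *)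

theory Defs
  imports Main
begin

text \<open>The four-element non-unital ring E = {0, kappa, tau, zeta}, zeta = kappa + tau.
  Every element is u*kappa + v*zeta with u, v in F2:
  E0 = (0,0), Ek = kappa = (1,0), Ez = zeta = (0,1), Et = tau = (1,1).
  Addition is componentwise XOR (characteristic 2); multiplication:
  e*kappa = e*tau = e, e*zeta = e*0 = 0.\<close>

datatype E = E0 | Ek | Et | Ez

fun E_to :: "E \<Rightarrow> bool \<times> bool" where
  "E_to E0 = (False, False)"
| "E_to Ek = (True, False)"
| "E_to Ez = (False, True)"
| "E_to Et = (True, True)"

fun E_of :: "bool \<times> bool \<Rightarrow> E" where
  "E_of (False, False) = E0"
| "E_of (True, False) = Ek"
| "E_of (False, True) = Ez"
| "E_of (True, True) = Et"

lemma E_of_to[simp]: "E_of (E_to e) = e" by (cases e) auto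

instantiation E :: ab_group_add
begin
definition zero_E :: E where "zero_E = E0"
definition plus_E :: "E \<Rightarrow> E \<Rightarrow> E" where
  "plus_E a b = E_of (fst (E_to a) \<noteq> fst (E_to b), snd (E_to a) \<noteq> snd (E_to b))"
definition uminus_E :: "E \<Rightarrow> E" where "uminus_E a = a"
definition minus_E :: "E \<Rightarrow> E \<Rightarrow> E" where "minus_E a b = a + b"
instance
  apply standard
  unfolding zero_E_def plus_E_def uminus_E_def minus_E_def
  apply (case_tac a; case_tac b; case_tac c; simp)
  apply (case_tac a; case_tac b; simp)
  apply (case_tac a; simp)
  apply (case_tac a; simp)
  apply (case_tac a; case_tac b; simp)
  done
end

instantiation E :: times
begin
definition times_E :: "E \<Rightarrow> E \<Rightarrow> E" where
  "times_E a b = (if fst (E_to b) then a else E0)"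
instance ..
end

lemma E_tables:
  "Ek * Ek = Ek" "Et * Et = Et" "Ek * Et = Ek" "Et * Ek = Et" "Ek + Et = Ez"
  by (simp_all add: times_E_def plus_E_def)

text \<open>Residue map pi : E -> F2, pi(u kappa + v zeta) = u (F2 rendered as bool).\<close>
definition piE :: "E \<Rightarrow> bool" where "piE e = fst (E_to e)"

definition zeta_scal :: "bool \<Rightarrow> E" where "zeta_scal b = (if b then Ez else E0)"

text \<open>E^(2n): vectors indexed by 0..<2n (coordinates i and n+i form the (u|v) split),
  represented as functions vanishing outside {0..<2n}.\<close>
definition Evec :: "nat \<Rightarrow> (nat \<Rightarrow> E) set" where
  "Evec n = {x. \<forall>i\<ge>2*n. x i = 0}"

definition F2vec :: "nat \<Rightarrow> (nat \<Rightarrow> bool) set" where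
  "F2vec n = {x. \<forall>i\<ge>2*n. x i = False}"

definition E_linear_code :: "nat \<Rightarrow> (nat \<Rightarrow> E) set \<Rightarrow> bool" where
  "E_linear_code n C \<longleftrightarrow> C \<subseteq> Evec n \<and> (\<lambda>_. 0) \<in> C
     \<and> (\<forall>x\<in>C. \<forall>y\<in>C. (\<lambda>i. x i + y i) \<in> C)
     \<and> (\<forall>e::E. \<forall>x\<in>C. (\<lambda>i. e * x i) \<in> C)"

definition C_Res :: "nat \<Rightarrow> (nat \<Rightarrow> E) set \<Rightarrow> (nat \<Rightarrow> bool) set" where
  "C_Res n C = (\<lambda>c. \<lambda>i. piE (c i)) ` C"

definition C_Tor :: "nat \<Rightarrow> (nat \<Rightarrow> E) set \<Rightarrow> (nat \<Rightarrow> bool) set" where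
  "C_Tor n C = {v \<in> F2vec n. (\<lambda>i. zeta_scal (v i)) \<in> C}"

definition free_code :: "nat \<Rightarrow> (nat \<Rightarrow> E) set \<Rightarrow> bool" where
  "free_code n C \<longleftrightarrow> C_Res n C = C_Tor n C"

definition symp :: "nat \<Rightarrow> (nat \<Rightarrow> E) \<Rightarrow> (nat \<Rightarrow> E) \<Rightarrow> E" where
  "symp n x y = (\<Sum>i<n. x i * y (n + i)) + (\<Sum>i<n. x (n + i) * y i)"

definition perp_SL :: "nat \<Rightarrow> (nat \<Rightarrow> E) set \<Rightarrow> (nat \<Rightarrow> E) set" where
  "perp_SL n C = {z \<in> Evec n. \<forall>w\<in>C. symp n z w = 0}"

definition perp_SR :: "nat \<Rightarrow> (nat \<Rightarrow> E) set \<Rightarrow> (nat \<Rightarrow> E) set" where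
  "perp_SR n C = {z \<in> Evec n. \<forall>w\<in>C. symp n w z = 0}"

definition perp_S :: "nat \<Rightarrow> (nat \<Rightarrow> E) set \<Rightarrow> (nat \<Rightarrow> E) set" where
  "perp_S n C = perp_SL n C \<inter> perp_SR n C"

definition LSHull :: "nat \<Rightarrow> (nat \<Rightarrow> E) set \<Rightarrow> (nat \<Rightarrow> E) set" where
  "LSHull n C = C \<inter> perp_SL n C"

definition SHull :: "nat \<Rightarrow> (nat \<Rightarrow> E) set \<Rightarrow> (nat \<Rightarrow> E) set" where
  "SHull n C = C \<inter> perp_S n C"

end

theory Submission
  imports Defs "HOL-Library.Z2"
begin

text \<open>Write e = u \<kappa> + v \<zeta>. Since x y = \<pi>(y) x, both coordinates of \<open>symp n x y\<close> are
  binary symplectic forms: the \<kappa>-coordinate pairs the residues of x and y, the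
  \<zeta>-coordinate pairs the \<zeta>-part of x with the residue of y. Let z be left orthogonal
  to C and w in C. The residue form is symmetric, which settles the \<kappa>-coordinate of
  \<open>symp n w z\<close>. The word \<kappa> w + w = \<zeta> v, v the \<zeta>-part of w, lies in C, so v is a
  torsion word; freeness makes v the residue of some c in C, and the \<zeta>-coordinate of
  \<open>symp n w z\<close> becomes the \<kappa>-coordinate of \<open>symp n z c\<close>.\<close>

definition resE :: "E \<Rightarrow> bit" where "resE e = of_bool (fst (E_to e))"

definition zetaE :: "E \<Rightarrow> bit" where "zetaE e = of_bool (snd (E_to e))"

lemma E_eq_0_iff: "e = 0 \<longleftrightarrow> resE e = 0 \<and> zetaE e = 0"
  by (cases e) (simp_all add: resE_def zetaE_def zero_E_def)

lemma resE_zero: "resE 0 = 0" and zetaE_zero: "zetaE 0 = 0"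
  by (simp_all add: resE_def zetaE_def zero_E_def)

lemma resE_add: "resE (a + b) = resE a + resE b"
  by (cases a; cases b) (simp_all add: resE_def plus_E_def)

lemma zetaE_add: "zetaE (a + b) = zetaE a + zetaE b"
  by (cases a; cases b) (simp_all add: zetaE_def plus_E_def)

lemma resE_mult: "resE (a * b) = resE a * resE b"
  by (cases a; cases b) (simp_all add: resE_def times_E_def)

lemma zetaE_mult: "zetaE (a * b) = zetaE a * resE b"
  by (cases a; cases b) (simp_all add: resE_def zetaE_def times_E_def)

lemma resE_sum: "resE (sum f A) = (\<Sum>i\<in>A. resE (f i))"
  by (induction A rule: infinite_finite_induct)
    (simp_all add: resE_zero resE_add)

lemma zetaE_sum: "zetaE (sum f A) = (\<Sum>i\<in>A. zetaE (f i))"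
  by (induction A rule: infinite_finite_induct)
    (simp_all add: zetaE_zero zetaE_add)

definition symp_F2 :: "nat \<Rightarrow> (nat \<Rightarrow> bit) \<Rightarrow> (nat \<Rightarrow> bit) \<Rightarrow> bit" where
  "symp_F2 n u v = (\<Sum>i<n. u i * v (n + i)) + (\<Sum>i<n. u (n + i) * v i)"

lemma symp_F2_commute: "symp_F2 n u v = symp_F2 n v u"
  unfolding symp_F2_def by (simp only: mult.commute add.commute)

lemma resE_symp: "resE (symp n x y) = symp_F2 n (resE \<circ> x) (resE \<circ> y)"
  by (simp add: symp_def symp_F2_def resE_add resE_sum resE_mult)

lemma zetaE_symp: "zetaE (symp n x y) = symp_F2 n (zetaE \<circ> x) (resE \<circ> y)"
  by (simp add: symp_def symp_F2_def zetaE_add zetaE_sum zetaE_mult)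

lemma zeta_part_in_C_Tor:
  assumes "E_linear_code n C" and "w \<in> C"
  shows "(\<lambda>i. snd (E_to (w i))) \<in> C_Tor n C"
proof -
  have closed: "C \<subseteq> Evec n" "\<And>x y. x \<in> C \<Longrightarrow> y \<in> C \<Longrightarrow> (\<lambda>i. x i + y i) \<in> C"
    "\<And>e x. x \<in> C \<Longrightarrow> (\<lambda>i. e * x i) \<in> C"
    using assms(1) unfolding E_linear_code_def by auto
  have "(\<lambda>i. Ek * w i + w i) \<in> C"
    using closed(2)[OF closed(3)[OF assms(2)] assms(2)] .
  moreover have "(\<lambda>i. Ek * w i + w i) = (\<lambda>i. zeta_scal (snd (E_to (w i))))"
  proof
    fix i show "Ek * w i + w i = zeta_scal (snd (E_to (w i)))"
      by (cases "w i") (simp_all add: times_E_def plus_E_def zeta_scal_def)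
  qed
  moreover have "(\<lambda>i. snd (E_to (w i))) \<in> F2vec n"
    using closed(1) assms(2) by (auto simp: Evec_def F2vec_def zero_E_def)
  ultimately show ?thesis
    unfolding C_Tor_def by simp
qed

lemma free_code_zeta_part_is_residue:
  assumes "E_linear_code n C" and "free_code n C" and "w \<in> C"
  obtains c where "c \<in> C" and "zetaE \<circ> w = resE \<circ> c"
proof -
  have "(\<lambda>i. snd (E_to (w i))) \<in> C_Res n C"
    using zeta_part_in_C_Tor[OF assms(1,3)] assms(2) unfolding free_code_def by simp
  then obtain c where "c \<in> C" and "(\<lambda>i. snd (E_to (w i))) = (\<lambda>i. piE (c i))"
    unfolding C_Res_def by auto
  then have "zetaE \<circ> w = resE \<circ> c"
    by (simp add: fun_eq_iff zetaE_def resE_def piE_def)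
  with \<open>c \<in> C\<close> show thesis by (rule that)
qed

lemma free_code_perp_SL_subset_perp_SR:
  assumes "E_linear_code n C" and "free_code n C"
  shows "perp_SL n C \<subseteq> perp_SR n C"
proof
  fix z assume "z \<in> perp_SL n C"
  then have "z \<in> Evec n" and z_perp: "\<And>w. w \<in> C \<Longrightarrow> symp n z w = 0"
    unfolding perp_SL_def by auto
  have "symp n w z = 0" if "w \<in> C" for w
  proof -
    obtain c where "c \<in> C" and zeta_w: "zetaE \<circ> w = resE \<circ> c"
      using free_code_zeta_part_is_residue[OF assms \<open>w \<in> C\<close>] .
    have "resE (symp n w z) = resE (symp n z w)"
      by (simp add: resE_symp symp_F2_commute)
    moreover have "zetaE (symp n w z) = resE (symp n z c)"
      by (simp add: zetaE_symp resE_symp zeta_w symp_F2_commute)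
    ultimately show ?thesis
      using z_perp \<open>w \<in> C\<close> \<open>c \<in> C\<close> by (simp add: E_eq_0_iff resE_zero)
  qed
  with \<open>z \<in> Evec n\<close> show "z \<in> perp_SR n C"
    unfolding perp_SR_def by blast
qed

theorem mainTheorem16:
  fixes n :: nat and C :: "(nat \<Rightarrow> E) set"
  assumes "E_linear_code n C" and "free_code n C"
  shows "LSHull n C = SHull n C"
  using free_code_perp_SL_subset_perp_SR[OF assms]
  unfolding LSHull_def SHull_def perp_S_def by blast

end
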